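(* Consider the faulty-starter delivery problem described in the context, with finisher starting position $(x,y)\neq(0,0)$, $y\ge0$, and $(x,y)\in\overline{D}(1,1)$. Then for every $a\in[0,1]$ and every algorithm $\mathcal{A}_a$ of the class described in the context, $\min\{\mathrm{CR}_{\mathcal{A}_d},\mathrm{CR}_{\mathcal{A}_0}\}\le \mathrm{CR}_{\mathcal{A}_a}$.
   Context: Setting. In the plane let $S=(0,0)$ and $T=(1,0)$. A "starter" drone carrying a package starts at $S$ at time $0$ and moves at unit speed along $\overline{ST}$ towards $T$. At an unknown time $t\in[0,1]$ it fails and stays forever at $(t,0)$ with the package (at time $s$ the package is at $(\min\{s,t\},0)$). A "finisher" drone starts at time $0$ at $P=(x,y)$ with $y\ge0$, moves at unit speed and can stop and turn instantaneously. The package can be handed over only when the drones are co-located; it is delivered at the first time the finisher, carrying the package, is at $T$. An online algorithm $\mathcal{A}$ specifies the finisher's trajectory using only $(x,y)$; $A(t)$ is its delivery time for fail time $t$. $\mathrm{Opt}(t)=\max\{1,\sqrt{(x-t)^2+y^2}+1-t\}$ is the optimal offline delivery time. $\mathrm{CR}_{\mathcal{A}}(t)=A(t)/\mathrm{Opt}(t)$ and $\mathrm{CR}_{\mathcal{A}}=\sup_{0\le t\le1}\mathrm{CR}_{\mathcal{A}}(t)$. $\overline{D}(c,r)$ denotes the closed disk of radius $r$ centered at $(c,0)$. Algorithms. $\mathcal{A}_0$: the finisher goes straight to $S$, then along $\overline{ST}$ towards $T$ until it finds the package, then on to $T$. $\mathcal{A}_d$ (for $x>0$): with $d=(x^2+y^2)/(2x)$,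 the finisher goes straight to $(d,0)$, then towards $S$ along the segment until it finds the package, then goes to $T$. For $a\in[0,1]$, an algorithm $\mathcal{A}_a$ is any online algorithm in which the finisher moves from $P$ along a straight line to $(a,0)$ and afterwards remains within $\overline{ST}$ until it picks up the package, after which it goes to $T$. *)

theory Defs
  imports "HOL-Analysis.Analysis"
begin

text \<open>S = (0,0), T = (1,0). A finisher trajectory (before pickup) is a function
  f :: real \<Rightarrow> real \<times> real of time (only times s \<ge> 0 matter).\<close>

text \<open>Position of the package at time s when the starter fails at time t.\<close>
definition pkg :: "real \<Rightarrow> real \<Rightarrow> real \<times> real" where
  "pkg t s = (min s t, 0)"

definition meet_times :: "(real \<Rightarrow> real \<times> real) \<Rightarrow> real \<Rightarrow> real set" where
  "meet_times f t = {s. 0 \<le> s \<and> f s = pkg t s}"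

text \<open>Delivery time: the finisher picks up the package at the first meeting time \<tau>
  (the package is then at (min \<tau> t, 0)) and goes straight to T = (1,0).\<close>
definition deliv :: "(real \<Rightarrow> real \<times> real) \<Rightarrow> real \<Rightarrow> ereal" where
  "deliv f t = (if meet_times f t \<noteq> {}
      then ereal (Inf (meet_times f t) + 1 - min (Inf (meet_times f t)) t)
      else \<infinity>)"

definition opt :: "real \<Rightarrow> real \<Rightarrow> real \<Rightarrow> real" where
  "opt x y t = max 1 (sqrt ((x - t)\<^sup>2 + y\<^sup>2) + 1 - t)"

definition CR :: "real \<Rightarrow> real \<Rightarrow> (real \<Rightarrow> real \<times> real) \<Rightarrow> ereal" where
  "CR x y f = (SUP t\<in>{0..1}. deliv f t / ereal (opt x y t))"

definition path_A0 :: "real \<Rightarrow> real \<Rightarrow> real \<Rightarrow> real \<times> real" where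
  "path_A0 x y s = (let h = sqrt (x\<^sup>2 + y\<^sup>2) in
     if s \<le> h then (x, y) + (s / h) *\<^sub>R ((0, 0) - (x, y))
     else (min (s - h) 1, 0))"

definition path_Ad :: "real \<Rightarrow> real \<Rightarrow> real \<Rightarrow> real \<times> real" where
  "path_Ad x y s = (let d = (x\<^sup>2 + y\<^sup>2) / (2 * x) in
     if s \<le> d then (x, y) + (s / d) *\<^sub>R ((d, 0) - (x, y))
     else (max (d - (s - d)) 0, 0))"

end

theory Submission
  imports Defs
begin

(*
  Write P = (x, y) and let d be the point where A_d turns: the point of ST equidistant from
  P and S. Since P lies in D(1,1) we have d \<le> 1, and A_d delivers optimally for t \<ge> d and
  at time 1 + 2d - 2t for t < d. If y = 0, A_0 is optimal, so let y > 0; an A_a finisher then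
  reaches the axis at time |P(a,0)| and afterwards moves at unit speed along ST.

  If a \<ge> d, the triangle inequality |P(a,0)| \<ge> 2d - a shows that it never finds the package
  before A_d does. If a < d, it always meets the package after the failure. Let \<tau> be its
  first pickup time when t = 1. If it visited S before \<tau>, then \<tau> \<ge> |PS| + 1, which bounds
  the ratio of A_0. Otherwise let c > 0 be the leftmost point it visits between reaching the
  axis and \<tau>: a package failing at t < c is found only after \<tau>, so the ratio of A_a is at
  least (W + 3 - 2t) / Opt(t) on [0, c), where W = |P(a,0)| + a - 2c \<ge> |P(c,0)| - c. By
  continuity this also holds at t = c, and a short computation then bounds the ratio of A_d
  on [c, d) by CR(A_a), unless CR(A_a) \<ge> 1 + |PS|, in which case A_0 does at least as well.
*)

lemma dist_on_axis: "dist ((p::real), (0::real)) (q, 0) = \<bar>p - q\<bar>"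
  by (simp add: dist_Pair_Pair dist_real_def)

lemma dist_to_axis: "dist ((x::real), (y::real)) (t, 0) = sqrt ((x - t)\<^sup>2 + y\<^sup>2)"
  by (simp add: dist_Pair_Pair dist_real_def)

lemma opt_ge_1: "1 \<le> opt x y t"
  unfolding opt_def by simp

lemma opt_pos: "0 < opt x y t"
  using opt_ge_1[of x y t] by linarith

lemma opt_eq_dist: "opt x y t = max 1 (dist (x, y) (t, 0) + 1 - t)"
  unfolding opt_def dist_to_axis ..

lemma Inf_meet_times_le:
  assumes "s \<in> meet_times f t"
  shows "Inf (meet_times f t) \<le> s"
  by (rule cInf_lower) (use assms in \<open>auto simp: meet_times_def bdd_below_def\<close>)

lemma deliv_le:
  assumes "0 \<le> s" "f s = pkg t s"
  shows "deliv f t \<le> ereal (s + 1 - min s t)"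
proof -
  have s_meet: "s \<in> meet_times f t" using assms unfolding meet_times_def by auto
  then have ne: "meet_times f t \<noteq> {}" by auto
  have "Inf (meet_times f t) \<le> s" using Inf_meet_times_le[OF s_meet] .
  then have "Inf (meet_times f t) + 1 - min (Inf (meet_times f t)) t \<le> s + 1 - min s t"
    by (simp add: min_def)
  then show ?thesis using ne unfolding deliv_def by simp
qed

lemma deliv_ge:
  assumes "\<And>s. s \<in> meet_times f t \<Longrightarrow> b \<le> s" "t \<le> b"
  shows "ereal (b + 1 - t) \<le> deliv f t"
proof (cases "meet_times f t = {}")
  case True
  then show ?thesis unfolding deliv_def by simp
next
  case False
  have "b \<le> Inf (meet_times f t)"
    by (rule cInf_greatest) (use False assms in auto)
  then have "b + 1 - t \<le> Inf (meet_times f t) + 1 - min (Inf (meet_times f t)) t"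
    using assms by (simp add: min_def)
  then show ?thesis using False unfolding deliv_def by simp
qed

lemma ratio_le_CR:
  assumes "t \<in> {0..1}"
  shows "deliv f t / ereal (opt x y t) \<le> CR x y f"
  unfolding CR_def by (rule SUP_upper) (use assms in auto)

lemma CR_le:
  assumes "\<And>t. t \<in> {0..1} \<Longrightarrow> deliv f t / ereal (opt x y t) \<le> B"
  shows "CR x y f \<le> B"
  unfolding CR_def by (rule SUP_least) (use assms in auto)

lemma ratio_le_of_meet:
  assumes "0 \<le> s" "f s = pkg t s" "s + 1 - min s t \<le> v"
  shows "deliv f t / ereal (opt x y t) \<le> ereal (v / opt x y t)"
proof -
  have "deliv f t \<le> ereal v"
    using deliv_le[of s f t, OF assms(1,2)] assms(3) by (simp add: order.trans)
  then have "deliv f t / ereal (opt x y t) \<le> ereal v / ereal (opt x y t)"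
    by (rule ereal_divide_right_mono) (use opt_pos in auto)
  then show ?thesis using opt_pos[of x y t] by simp
qed

lemma CR_ge_of_meet_times_ge:
  assumes "t \<in> {0..1}" "\<And>s. s \<in> meet_times f t \<Longrightarrow> b \<le> s" "t \<le> b"
  shows "ereal ((b + 1 - t) / opt x y t) \<le> CR x y f"
proof -
  have "ereal (b + 1 - t) / ereal (opt x y t) \<le> deliv f t / ereal (opt x y t)"
    by (rule ereal_divide_right_mono) (use deliv_ge[OF assms(2,3)] opt_pos in auto)
  also have "\<dots> \<le> CR x y f" by (rule ratio_le_CR[OF assms(1)])
  finally show ?thesis using opt_pos[of x y t] by simp
qed

lemma CR_eq_infinity:
  assumes "t \<in> {0..1}" "meet_times f t = {}"
  shows "CR x y f = \<infinity>"
  using ratio_le_CR[OF assms(1), of f x y] assms(2) opt_pos[of x y t]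
  by (simp add: deliv_def)

lemma CR_ge_1:
  assumes "dist (x, y) (1, 0) \<le> 1"
  shows "1 \<le> CR x y f"
proof -
  have "opt x y 1 = 1" using assms unfolding opt_eq_dist by simp
  moreover have "ereal 1 \<le> deliv f 1" unfolding deliv_def by (auto simp: min_def)
  ultimately show ?thesis using ratio_le_CR[of 1 f x y] by (simp add: one_ereal_def[symmetric])
qed

lemma closed_meet_times:
  assumes "continuous_on {0..} f"
  shows "closed (meet_times f t)"
proof -
  have "meet_times f t = {0..} \<inter> (\<lambda>s. f s - pkg t s) -` {0}"
    unfolding meet_times_def by auto
  moreover have "continuous_on {0..} (\<lambda>s. f s - pkg t s)"
    unfolding pkg_def by (intro continuous_intros assms)
  ultimately show ?thesis
    by (metis closed_atLeast closed_singleton continuous_closed_preimage)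
qed

lemma Inf_meet_times_mem:
  assumes "continuous_on {0..} f" "meet_times f t \<noteq> {}"
  shows "Inf (meet_times f t) \<in> meet_times f t"
  by (rule closed_contains_Inf)
    (use assms closed_meet_times in \<open>auto simp: meet_times_def bdd_below_def\<close>)

lemma CR_A0_le:
  assumes "(x, y) \<noteq> (0, 0)"
  shows "CR x y (path_A0 x y) \<le> 1 + dist (x, y) (0, 0)"
proof (rule CR_le)
  fix t :: real
  assume t: "t \<in> {0..1}"
  define h where "h = dist (x, y) (0, 0)"
  have h_pos: "0 < h" using assms unfolding h_def by simp
  have "path_A0 x y (h + t) = pkg t (h + t)"
    using t h_pos unfolding path_A0_def pkg_def Let_def h_def dist_to_axis by auto
  then have "deliv (path_A0 x y) t / ereal (opt x y t) \<le> ereal ((1 + h) / opt x y t)"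
    by (rule ratio_le_of_meet[rotated]) (use t h_pos in auto)
  also have "\<dots> \<le> ereal (1 + h)"
    using opt_ge_1[of x y t] h_pos by (simp add: divide_le_eq)
  finally show "deliv (path_A0 x y) t / ereal (opt x y t) \<le> ereal (1 + h)" .
qed

lemma CR_A0_on_axis_le_1:
  assumes "0 < x"
  shows "CR x 0 (path_A0 x 0) \<le> 1"
proof (rule CR_le)
  fix t :: real
  assume t: "t \<in> {0..1}"
  show "deliv (path_A0 x 0) t / ereal (opt x 0 t) \<le> 1"
  proof (cases "x / 2 \<le> t")
    case True
    have "path_A0 x 0 (x / 2) = pkg t (x / 2)"
      using assms True unfolding path_A0_def pkg_def Let_def by auto
    then have "deliv (path_A0 x 0) t / ereal (opt x 0 t) \<le> ereal (1 / opt x 0 t)"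
      by (rule ratio_le_of_meet[rotated]) (use assms True in auto)
    also have "\<dots> \<le> 1" using opt_ge_1[of x 0 t] by simp
    finally show ?thesis .
  next
    case False
    have "path_A0 x 0 (x - t) = pkg t (x - t)"
      using assms t False unfolding path_A0_def pkg_def Let_def by auto
    then have "deliv (path_A0 x 0) t / ereal (opt x 0 t) \<le> ereal ((x + 1 - 2 * t) / opt x 0 t)"
      by (rule ratio_le_of_meet[rotated]) (use assms t False in auto)
    also have "\<dots> \<le> 1"
      using False opt_ge_1[of x 0 t] unfolding opt_def by simp
    finally show ?thesis .
  qed
qed

lemma continuous_le_at_right_endpoint:
  fixes g h :: "real \<Rightarrow> real"
  assumes "a < b" "continuous_on {a..b} g" "continuous_on {a..b} h"
    and "\<And>t. t \<in> {a..<b} \<Longrightarrow> g t \<le> h t"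
  shows "g b \<le> h b"
proof -
  have "(\<lambda>t. g t - h t) b \<le> 0"
    by (rule continuous_le_on_closure[where S = "{a..<b}"])
      (use assms in \<open>auto intro: continuous_on_diff\<close>)
  then show ?thesis by simp
qed

definition turn_point :: "real \<Rightarrow> real \<Rightarrow> real" where
  "turn_point x y = (x\<^sup>2 + y\<^sup>2) / (2 * x)"

lemma path_Ad_eq:
  "path_Ad x y s = (if s \<le> turn_point x y
     then (x, y) + (s / turn_point x y) *\<^sub>R ((turn_point x y, 0) - (x, y))
     else (max (turn_point x y - (s - turn_point x y)) 0, 0))"
  unfolding path_Ad_def turn_point_def Let_def by simp

lemma Ad_ratio_le_1_beyond_turn_point:
  assumes "0 < x" "t \<in> {0..1}" "turn_point x y \<le> t"
  shows "deliv (path_Ad x y) t / ereal (opt x y t) \<le> 1"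
proof -
  define d where "d = turn_point x y"
  have "0 < d" unfolding d_def turn_point_def using assms by (simp add: add_pos_nonneg)
  then have "path_Ad x y d = pkg t d"
    using assms unfolding path_Ad_eq pkg_def d_def[symmetric] by auto
  then have "deliv (path_Ad x y) t / ereal (opt x y t) \<le> ereal (1 / opt x y t)"
    by (rule ratio_le_of_meet[rotated]) (use assms \<open>0 < d\<close> d_def in auto)
  also have "\<dots> \<le> 1" using opt_ge_1[of x y t] by simp
  finally show ?thesis .
qed

lemma Ad_ratio_le_before_turn_point:
  assumes "t \<in> {0..1}" "t < turn_point x y"
  shows "deliv (path_Ad x y) t / ereal (opt x y t)
    \<le> ereal ((1 + 2 * turn_point x y - 2 * t) / opt x y t)"
proof -
  define d where "d = turn_point x y"
  have "path_Ad x y (2 * d - t) = pkg t (2 * d - t)"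
    using assms unfolding path_Ad_eq pkg_def d_def[symmetric] by auto
  then show ?thesis unfolding d_def[symmetric]
    by (rule ratio_le_of_meet[rotated]) (use assms d_def in auto)
qed

locale start_in_disk =
  fixes x y :: real
  assumes start_ne: "(x, y) \<noteq> (0, 0)"
    and in_disk: "(x - 1)\<^sup>2 + y\<^sup>2 \<le> 1"
begin

abbreviation d where "d \<equiv> turn_point x y"

lemma x_pos: "0 < x"
proof (rule ccontr)
  assume "\<not> 0 < x"
  moreover have sq: "(x - 1)\<^sup>2 = x * x - 2 * x + 1" by (simp add: power2_eq_square algebra_simps)
  moreover have "0 \<le> x * x" by simp
  ultimately have "y\<^sup>2 \<le> 0" using in_disk by linarith
  then have "y = 0" by simp
  then have "x = 0" using \<open>\<not> 0 < x\<close> in_disk sq \<open>0 \<le> x * x\<close> by (simp, linarith)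
  then show False using start_ne \<open>y = 0\<close> by simp
qed

lemma turn_point_pos: "0 < d"
  unfolding turn_point_def using x_pos by (simp add: add_pos_nonneg)

lemma turn_point_le_1: "d \<le> 1"
proof -
  have "x\<^sup>2 + y\<^sup>2 \<le> 2 * x" using in_disk by (simp add: power2_eq_square algebra_simps)
  then show ?thesis unfolding turn_point_def using x_pos by simp
qed

lemma dist_to_axis_sq: "(dist (x, y) (t, 0))\<^sup>2 = 2 * x * (d - t) + t\<^sup>2"
proof -
  have "(dist (x, y) (t, 0))\<^sup>2 = (x - t)\<^sup>2 + y\<^sup>2"
    unfolding dist_to_axis by simp
  also have "\<dots> = (x\<^sup>2 + y\<^sup>2) - 2 * x * t + t\<^sup>2"
    by (simp add: power2_eq_square algebra_simps)
  also have "x\<^sup>2 + y\<^sup>2 = 2 * x * d"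
    unfolding turn_point_def using x_pos by simp
  finally show ?thesis by (simp add: algebra_simps)
qed

lemma dist_turn_point: "dist (x, y) (d, 0) = d"
  by (rule power2_eq_imp_eq) (use dist_to_axis_sq[of d] turn_point_pos in auto)

lemma le_dist_to_axis:
  assumes "t \<le> d"
  shows "t \<le> dist (x, y) (t, 0)"
proof (rule power2_le_imp_le)
  have "0 \<le> 2 * x * (d - t)" using x_pos assms by simp
  then show "t\<^sup>2 \<le> (dist (x, y) (t, 0))\<^sup>2" unfolding dist_to_axis_sq by simp
qed simp

lemma less_dist_to_axis:
  assumes "t < d"
  shows "t < dist (x, y) (t, 0)"
proof (rule power2_less_imp_less)
  have "0 < 2 * x * (d - t)" using x_pos assms by simp
  then show "t\<^sup>2 < (dist (x, y) (t, 0))\<^sup>2" unfolding dist_to_axis_sq by simp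
qed simp

lemma opt_eq_below_turn_point:
  assumes "t \<le> d"
  shows "opt x y t = 1 + (dist (x, y) (t, 0) - t)"
  unfolding opt_eq_dist using le_dist_to_axis[OF assms] by simp

lemma dist_T_le_1: "dist (x, y) (1, 0) \<le> 1"
  unfolding dist_to_axis using in_disk by (simp add: real_sqrt_le_1_iff)

lemma Ad_delivery_le_mult_opt:
  assumes "0 \<le> t" "c \<le> t" "t \<le> d" "2 * d - 2 * c \<le> (M - 1) * opt x y c" "1 \<le> M"
    and M_less: "M < 1 + dist (x, y) (0, 0)"
  shows "1 + 2 * d - 2 * t \<le> M * opt x y t"
proof -
  define e where "e = dist (x, y) (t, 0) - t"
  define E where "E = dist (x, y) (c, 0) - c"
  have opt_t: "opt x y t = 1 + e" and opt_c: "opt x y c = 1 + E"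
    unfolding e_def E_def using opt_eq_below_turn_point assms by auto
  have e_nonneg: "0 \<le> e" and E_nonneg: "0 \<le> E"
    unfolding e_def E_def using le_dist_to_axis assms by auto
  have e_ge_E: "E - 2 * (t - c) \<le> e"
    using dist_triangle[of "(x, y)" "(c, 0)" "(t, 0)"] assms(2)
    unfolding e_def E_def by (simp add: dist_on_axis)
  (* For M \<le> 2 the claim is the hypothesis at c plus (M - 1) e + (2 - M) E \<ge> 0;
     for M > 2 the bound 2 (1 + e) already suffices. *)
  show ?thesis
  proof (cases "M \<le> 2")
    case True
    have "e \<le> M * e" using mult_right_mono[of 1 M e] assms(5) e_nonneg by simp
    moreover have "M * E \<le> 2 * E" using mult_right_mono[OF True E_nonneg] .
    moreover have "2 * d - 2 * c \<le> M - 1 + M * E - E"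
      using assms(4) unfolding opt_c by (simp add: algebra_simps)
    ultimately show ?thesis using e_ge_E unfolding opt_t by (simp add: algebra_simps)
  next
    case False
    have "1 - 2 * t \<le> 2 * e"
    proof (cases "1 \<le> 2 * t")
      case False
      have "dist (x, y) (0, 0) - 2 * t \<le> e"
        using dist_triangle[of "(x, y)" "(0, 0)" "(t, 0)"] assms(1)
        unfolding e_def by (simp add: dist_on_axis)
      then show ?thesis using M_less \<open>\<not> M \<le> 2\<close> False by linarith
    qed (use e_nonneg in simp)
    then have "1 + 2 * d - 2 * t \<le> 2 + 2 * e"
      using turn_point_le_1 by linarith
    also have "\<dots> = 2 * (1 + e)" by simp
    also have "\<dots> \<le> M * (1 + e)"
      using False e_nonneg by (intro mult_right_mono) auto
    finally show ?thesis unfolding opt_t .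
  qed
qed

lemma CR_Ad_le:
  assumes c_pos: "0 < c" and c_le: "c \<le> d" and W: "dist (x, y) (c, 0) - c \<le> W"
    and detour: "\<And>t. t \<in> {0..<c} \<Longrightarrow> W + 3 - 2 * t \<le> M * opt x y t"
    and M_ge: "1 \<le> M" and M_less: "M < 1 + dist (x, y) (0, 0)"
  shows "CR x y (path_Ad x y) \<le> ereal M"
proof -
  have "W + 3 - 2 * c \<le> M * opt x y c"
  proof (rule continuous_le_at_right_endpoint
      [where g = "\<lambda>t. W + 3 - 2 * t" and h = "\<lambda>t. M * opt x y t", OF c_pos _ _ detour])
    show "continuous_on {0..c} (\<lambda>t. M * opt x y t)"
      unfolding opt_def by (intro continuous_intros)
  qed (intro continuous_intros)
  moreover have "(M - 1) * opt x y c = M * opt x y c - opt x y c"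
    by (simp add: algebra_simps)
  ultimately have turn_c: "2 * d - 2 * c \<le> (M - 1) * opt x y c"
    using W turn_point_le_1 opt_eq_below_turn_point[OF c_le] by linarith
  show ?thesis
  proof (rule CR_le)
    fix t :: real
    assume t: "t \<in> {0..1}"
    show "deliv (path_Ad x y) t / ereal (opt x y t) \<le> ereal M"
    proof (cases "d \<le> t")
      case True
      have "deliv (path_Ad x y) t / ereal (opt x y t) \<le> 1"
        by (rule Ad_ratio_le_1_beyond_turn_point[OF x_pos t True])
      also have "\<dots> \<le> ereal M" using M_ge by simp
      finally show ?thesis .
    next
      case False
      have "1 + 2 * d - 2 * t \<le> M * opt x y t"
      proof (cases "t < c")
        case True
        have "1 + 2 * d - 2 * t \<le> W + 3 - 2 * t"
          using W le_dist_to_axis[OF c_le] turn_point_le_1 by linarith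
        also have "\<dots> \<le> M * opt x y t" using detour True t by simp
        finally show ?thesis .
      next
        case False
        then show ?thesis
          using t \<open>\<not> d \<le> t\<close> by (intro Ad_delivery_le_mult_opt[OF _ _ _ turn_c M_ge M_less]) auto
      qed
      then have "(1 + 2 * d - 2 * t) / opt x y t \<le> M"
        by (simp add: pos_divide_le_eq opt_pos)
      moreover have "deliv (path_Ad x y) t / ereal (opt x y t)
          \<le> ereal ((1 + 2 * d - 2 * t) / opt x y t)"
        using Ad_ratio_le_before_turn_point[OF t] False by simp
      ultimately show ?thesis by (simp add: order.trans)
    qed
  qed
qed

end

locale Aa_algorithm = start_in_disk +
  fixes a :: real and f :: "real \<Rightarrow> real \<times> real"
  assumes y_pos: "0 < y"
    and a_range: "0 \<le> a" "a \<le> 1"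
    and speed: "\<And>r s. 0 \<le> r \<Longrightarrow> 0 \<le> s \<Longrightarrow> dist (f r) (f s) \<le> \<bar>r - s\<bar>"
    and straight: "\<And>s. 0 \<le> s \<Longrightarrow> s \<le> dist (x, y) (a, 0) \<Longrightarrow>
        f s = (x, y) + (s / dist (x, y) (a, 0)) *\<^sub>R ((a, 0) - (x, y))"
    and on_segment: "\<And>s. dist (x, y) (a, 0) \<le> s \<Longrightarrow>
        (\<exists>t\<in>{0..1}. \<forall>r\<in>{0..<s}. f r \<noteq> pkg t r) \<Longrightarrow>
        f s \<in> closed_segment (0, 0) (1, 0)"
begin

abbreviation arrival where "arrival \<equiv> dist (x, y) (a, 0)"

lemma arrival_pos: "0 < arrival"
  using y_pos by auto

lemma f_start: "f 0 = (x, y)"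
  using straight[of 0] arrival_pos by simp

lemma f_arrival: "f arrival = (a, 0)"
  using straight[of arrival] arrival_pos by simp

lemma f_continuous: "continuous_on {0..} f"
proof -
  have "lipschitz_on 1 {0..} f"
    by (rule lipschitz_onI) (use speed in \<open>auto simp: dist_real_def\<close>)
  then show ?thesis by (rule lipschitz_on_continuous_on)
qed

lemma travel_on_axis:
  assumes "0 \<le> r" "r \<le> s" "f r = (p, 0)" "f s = (q, 0)"
  shows "\<bar>q - p\<bar> \<le> s - r"
  using speed[of s r] assms by (simp add: dist_on_axis)

lemma meet_timesD:
  assumes "s \<in> meet_times f t"
  shows "arrival \<le> s" "f s = (min s t, 0)"
proof -
  show f_s: "f s = (min s t, 0)" using assms unfolding meet_times_def pkg_def by simp
  show "arrival \<le> s"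
  proof (rule ccontr)
    assume "\<not> arrival \<le> s"
    moreover have "0 \<le> s" using assms unfolding meet_times_def by simp
    ultimately have "snd (f s) = y * (1 - s / arrival)"
      using straight[of s] by (simp add: algebra_simps)
    moreover have "0 < 1 - s / arrival" using \<open>\<not> arrival \<le> s\<close> arrival_pos by simp
    ultimately have "0 < snd (f s)" using y_pos by simp
    then show False using f_s by simp
  qed
qed

lemma CR_Ad_le_CR_if_turn_point_le:
  assumes "d \<le> a"
  shows "CR x y (path_Ad x y) \<le> CR x y f"
proof (rule CR_le)
  fix t :: real
  assume t: "t \<in> {0..1}"
  show "deliv (path_Ad x y) t / ereal (opt x y t) \<le> CR x y f"
  proof (cases "d \<le> t")
    case True
    show ?thesis
      using Ad_ratio_le_1_beyond_turn_point[OF x_pos t True] CR_ge_1[OF dist_T_le_1, of f] by (rule order_trans)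
  next
    case False
    have "2 * d \<le> arrival + a"
      using dist_triangle[of "(x, y)" "(d, 0)" "(a, 0)"] dist_turn_point assms
      by (simp add: dist_on_axis)
    have "deliv (path_Ad x y) t / ereal (opt x y t) \<le> ereal ((1 + 2 * d - 2 * t) / opt x y t)"
      using Ad_ratio_le_before_turn_point[OF t, of x y] False by simp
    also have "\<dots> = ereal ((2 * d - t + 1 - t) / opt x y t)"
      by (simp add: algebra_simps)
    also have "\<dots> \<le> CR x y f"
    proof (rule CR_ge_of_meet_times_ge[OF t])
      fix s
      assume "s \<in> meet_times f t"
      then have "\<bar>min s t - a\<bar> \<le> s - arrival"
        using travel_on_axis[OF _ _ f_arrival] meet_timesD arrival_pos by simp
      then show "2 * d - t \<le> s" using \<open>2 * d \<le> arrival + a\<close> assms False by linarith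
    qed (use False in simp)
    finally show ?thesis .
  qed
qed

lemma meet_after_failure:
  assumes "a < d" "s \<in> meet_times f t"
  shows "t < s" "f s = (t, 0)"
proof -
  have "a < arrival" by (rule less_dist_to_axis[OF assms(1)])
  moreover have "\<bar>min s t - a\<bar> \<le> s - arrival"
    using travel_on_axis[OF _ _ f_arrival] meet_timesD[OF assms(2)] arrival_pos by simp
  ultimately show "t < s" by (cases "s \<le> t") auto
  then show "f s = (t, 0)" using meet_timesD(2)[OF assms(2)] by simp
qed

lemma CR_ge_if_origin_reached_first:
  assumes "a < d" "\<tau> \<in> meet_times f 1" "\<And>s. s \<in> meet_times f 1 \<Longrightarrow> \<tau> \<le> s"
    and "s0 \<in> meet_times f 0" "s0 \<le> \<tau>"
  shows "ereal (1 + dist (x, y) (0, 0)) \<le> CR x y f"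
proof -
  have s0_ge: "arrival \<le> s0" and f_s0: "f s0 = (0, 0)"
    using meet_timesD(1) meet_after_failure(2) assms by auto
  have "dist (x, y) (0, 0) \<le> s0"
    using speed[of 0 s0] f_start f_s0 s0_ge arrival_pos by simp
  moreover have "1 \<le> \<tau> - s0"
    using travel_on_axis[OF _ assms(5) f_s0 meet_after_failure(2)[OF assms(1,2)]] s0_ge arrival_pos
    by simp
  ultimately have "ereal ((1 + dist (x, y) (0, 0) + 1 - 1) / opt x y 1) \<le> CR x y f"
    using assms(3) by (intro CR_ge_of_meet_times_ge) force+
  moreover have "opt x y 1 = 1" using dist_T_le_1 unfolding opt_eq_dist by simp
  ultimately show ?thesis by simp
qed

lemma on_axis_before_origin_found:
  assumes "arrival \<le> s" "\<forall>r\<in>{0..s}. r \<notin> meet_times f 0"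
  shows "f s = (fst (f s), 0)" "0 < fst (f s)"
proof -
  have "0 \<le> s" using assms(1) arrival_pos by linarith
  have "\<forall>r\<in>{0..<s}. f r \<noteq> pkg 0 r" using assms(2) unfolding meet_times_def by auto
  then have "f s \<in> closed_segment (0, 0) (1, 0)"
    by (intro on_segment[OF assms(1)] bexI[of _ 0]) auto
  then obtain u :: real where "0 \<le> u" "f s = (u, 0)" unfolding in_segment by auto
  moreover have "f s \<noteq> (0, 0)"
    using assms(2) \<open>0 \<le> s\<close> unfolding meet_times_def pkg_def by auto
  ultimately show "f s = (fst (f s), 0)" "0 < fst (f s)" by auto
qed

lemma leftmost_point_before_origin_found:
  assumes "arrival \<le> \<tau>" "\<forall>r\<in>{0..\<tau>}. r \<notin> meet_times f 0"
  obtains sc c where "arrival \<le> sc" "sc \<le> \<tau>" "f sc = (c, 0)" "0 < c" "c \<le> a"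
    "\<And>s. arrival \<le> s \<Longrightarrow> s \<le> \<tau> \<Longrightarrow> c \<le> fst (f s)"
proof -
  have "continuous_on {arrival..\<tau>} (\<lambda>s. fst (f s))"
    by (intro continuous_intros continuous_on_subset[OF f_continuous]) auto
  moreover have "{arrival..\<tau>} \<noteq> {}" using assms(1) by simp
  ultimately obtain sc where sc: "sc \<in> {arrival..\<tau>}"
    and min: "\<And>s. s \<in> {arrival..\<tau>} \<Longrightarrow> fst (f sc) \<le> fst (f s)"
    using continuous_attains_inf[OF compact_Icc] by blast
  have "fst (f sc) \<le> a" using min[of arrival] assms(1) f_arrival by simp
  moreover have "f sc = (fst (f sc), 0)" "0 < fst (f sc)"
    using on_axis_before_origin_found sc assms(2) by auto
  ultimately show ?thesis using that sc min by auto
qed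

lemma CR_ge_after_detour:
  assumes "a < d" "\<tau> \<in> meet_times f 1"
    and "arrival \<le> sc" "sc \<le> \<tau>" "f sc = (c, 0)" "c \<le> a"
    and leftmost: "\<And>s. arrival \<le> s \<Longrightarrow> s \<le> \<tau> \<Longrightarrow> c \<le> fst (f s)"
    and t: "0 \<le> t" "t < c"
  shows "ereal ((arrival + a - 2 * c + 3 - 2 * t) / opt x y t) \<le> CR x y f"
proof -
  have f_\<tau>: "f \<tau> = (1, 0)" using meet_after_failure(2)[OF assms(1,2)] .
  have "a - c \<le> sc - arrival"
    using travel_on_axis[OF _ assms(3) f_arrival assms(5)] arrival_pos assms(6) by simp
  moreover have "1 - c \<le> \<tau> - sc"
    using travel_on_axis[OF _ assms(4,5) f_\<tau>] assms(3) arrival_pos by simp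
  ultimately have \<tau>_ge: "arrival + a + 1 - 2 * c \<le> \<tau>" by linarith
  have "ereal ((arrival + a - 2 * c + 2 - t + 1 - t) / opt x y t) \<le> CR x y f"
  proof (rule CR_ge_of_meet_times_ge)
    show "t \<in> {0..1}" using t assms(6) a_range by simp
  next
    fix s
    assume s: "s \<in> meet_times f t"
    have f_s: "f s = (t, 0)" using meet_after_failure(2)[OF assms(1) s] .
    have "\<tau> < s"
    proof (rule ccontr)
      assume "\<not> \<tau> < s"
      then show False using leftmost[of s] meet_timesD(1)[OF s] f_s t by simp
    qed
    then have "1 - t \<le> s - \<tau>"
      using travel_on_axis[OF _ _ f_\<tau> f_s] meet_timesD(1)[OF assms(2)] arrival_pos by simp
    then show "arrival + a - 2 * c + 2 - t \<le> s" using \<tau>_ge by linarith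
  next
    show "t \<le> arrival + a - 2 * c + 2 - t"
      using less_dist_to_axis[OF assms(1)] t assms(6) a_range by linarith
  qed
  then show ?thesis by (simp add: algebra_simps)
qed

lemma min_CR_le_CR_after_detour:
  assumes "a < d" "\<tau> \<in> meet_times f 1" "\<forall>r\<in>{0..\<tau>}. r \<notin> meet_times f 0"
  shows "min (CR x y (path_Ad x y)) (CR x y (path_A0 x y)) \<le> CR x y f"
proof (cases "CR x y f")
  case (real M)
  have M_ge: "1 \<le> M" using CR_ge_1[OF dist_T_le_1, of f] real by simp
  show ?thesis
  proof (cases "1 + dist (x, y) (0, 0) \<le> M")
    case True
    have "CR x y (path_A0 x y) \<le> 1 + dist (x, y) (0, 0)" by (rule CR_A0_le[OF start_ne])
    also have "\<dots> \<le> CR x y f" using True real by simp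
    finally show ?thesis by (rule min.coboundedI2)
  next
    case False
    obtain sc c where sc: "arrival \<le> sc" "sc \<le> \<tau>" "f sc = (c, 0)" "0 < c" "c \<le> a"
      and leftmost: "\<And>s. arrival \<le> s \<Longrightarrow> s \<le> \<tau> \<Longrightarrow> c \<le> fst (f s)"
      using leftmost_point_before_origin_found[OF meet_timesD(1)[OF assms(2)] assms(3)] by blast
    have "CR x y (path_Ad x y) \<le> ereal M"
    proof (rule CR_Ad_le[where W = "arrival + a - 2 * c"])
      show "dist (x, y) (c, 0) - c \<le> arrival + a - 2 * c"
        using dist_triangle[of "(x, y)" "(c, 0)" "(a, 0)"] sc(5) by (simp add: dist_on_axis)
      fix t
      assume "t \<in> {0..<c}"
      then have "(arrival + a - 2 * c + 3 - 2 * t) / opt x y t \<le> M"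
        using CR_ge_after_detour[OF assms(1,2) sc(1,2,3,5) leftmost] real by simp
      then show "arrival + a - 2 * c + 3 - 2 * t \<le> M * opt x y t"
        by (simp add: pos_divide_le_eq opt_pos)
    qed (use sc(4,5) assms(1) M_ge False in auto)
    then show ?thesis unfolding real by (rule min.coboundedI1)
  qed
next
  case MInf
  then show ?thesis using CR_ge_1[OF dist_T_le_1, of f] by simp
qed simp

theorem min_CR_le_CR:
  "min (CR x y (path_Ad x y)) (CR x y (path_A0 x y)) \<le> CR x y f"
proof (cases "d \<le> a")
  case True
  then show ?thesis by (intro min.coboundedI1 CR_Ad_le_CR_if_turn_point_le)
next
  case False
  then have a_less: "a < d" by simp
  show ?thesis
  proof (cases "meet_times f 1 = {}")
    case True
    then have "CR x y f = \<infinity>" by (intro CR_eq_infinity[of 1]) auto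
    then show ?thesis by simp
  next
    case False
    define \<tau> where "\<tau> = Inf (meet_times f 1)"
    have \<tau>: "\<tau> \<in> meet_times f 1" and \<tau>_min: "\<And>s. s \<in> meet_times f 1 \<Longrightarrow> \<tau> \<le> s"
      unfolding \<tau>_def using Inf_meet_times_mem[OF f_continuous False] Inf_meet_times_le by auto
    show ?thesis
    proof (cases "\<exists>s0\<in>meet_times f 0. s0 \<le> \<tau>")
      case True
      then have "ereal (1 + dist (x, y) (0, 0)) \<le> CR x y f"
        using CR_ge_if_origin_reached_first[OF a_less \<tau> \<tau>_min] by blast
      with CR_A0_le[OF start_ne] have "CR x y (path_A0 x y) \<le> CR x y f"
        by (rule order.trans)
      then show ?thesis by (rule min.coboundedI2)
    next
      case False
      then show ?thesis by (intro min_CR_le_CR_after_detour[OF a_less \<tau>]) auto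
    qed
  qed
qed

end

theorem lemma3:
  fixes x y a :: real and f :: "real \<Rightarrow> real \<times> real"
  assumes P_ne: "(x, y) \<noteq> (0, 0)"
    and y_nonneg: "0 \<le> y"
    and in_disk: "(x - 1)\<^sup>2 + y\<^sup>2 \<le> 1"
    and a_range: "0 \<le> a" "a \<le> 1"
    and speed: "\<And>r s. 0 \<le> r \<Longrightarrow> 0 \<le> s \<Longrightarrow> dist (f r) (f s) \<le> \<bar>r - s\<bar>"
    and straight: "\<And>s. 0 \<le> s \<Longrightarrow> s \<le> dist (x, y) (a, 0) \<Longrightarrow>
        f s = (x, y) + (s / dist (x, y) (a, 0)) *\<^sub>R ((a, 0) - (x, y))"
    and on_segment: "\<And>s. dist (x, y) (a, 0) \<le> s \<Longrightarrow>
        (\<exists>t\<in>{0..1}. \<forall>r\<in>{0..<s}. f r \<noteq> pkg t r) \<Longrightarrow>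
        f s \<in> closed_segment (0, 0) (1, 0)"
  shows "min (CR x y (path_Ad x y)) (CR x y (path_A0 x y)) \<le> CR x y f"
proof -
  interpret start_in_disk x y using P_ne in_disk by unfold_locales
  show ?thesis
  proof (cases "y = 0")
    case True
    have "CR x y (path_A0 x y) \<le> 1" using CR_A0_on_axis_le_1[OF x_pos] True by simp
    also have "\<dots> \<le> CR x y f" by (rule CR_ge_1[OF dist_T_le_1])
    finally show ?thesis by (rule min.coboundedI2)
  next
    case False
    interpret Aa_algorithm x y a f
      using False y_nonneg a_range speed straight on_segment by unfold_locales auto
    show ?thesis by (rule min_CR_le_CR)
  qed
qed

end
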